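(* Let $\mathcal{H}_O\simeq\mathbb{C}^{d_O}$ and $\mathcal{H}_R\simeq\mathbb{C}^{d_R}$. Let $H_R=\sum_{m=1}^{d_R}\lambda_m^{\uparrow}|\xi_m\rangle\langle\xi_m|$ with $\lambda_1^\uparrow\leqslant\dots\leqslant\lambda_{d_R}^\uparrow$ and $\{|\xi_m\rangle\}$ an orthonormal basis of $\mathcal{H}_R$; let $\beta\in(0,\infty)$ and $\rho_R(\beta)=e^{-\beta H_R}/\mathrm{tr}[e^{-\beta H_R}]=\sum_m r_m^{\downarrow}|\xi_m\rangle\langle\xi_m|$. Let $\rho_O=\sum_{l=1}^{d_O}o_l^{\downarrow}|\varphi_l\rangle\langle\varphi_l|$ be a density operator on $\mathcal{H}_O$ with $o_1^\downarrow\geqslant\dots\geqslant o_{d_O}^\downarrow$ and $\{|\varphi_l\rangle\}$ an orthonormal basis. Write $\rho=\rho_O\otimes\rho_R(\beta)=\sum_{n=1}^{d_Od_R}p_n^{\downarrow}|\psi_n\rangle\langle\psi_n|$, where $(p_n^\downarrow)_n$ is the non-increasing rearrangement of $(o_l^\downarrow r_m^\downarrow)_{l,m}$ and $(|\psi_n\rangle)_n$ the correspondingly rearranged family $(|\varphi_l\rangle\otimes|\xi_m\rangle)_{l,m}$. For a unitary $U$ on $\mathcal{H}_O\otimes\mathcal{H}_R$ let $\rho_O'=\mathrm{tr}_R[U\rho U^\dagger]$ and $p(\varphi_1|\rho_O')=\langle\varphi_1|\rho_O'|\varphi_1\rangle$. Then $$\max_{U}\, p(\varphi_1|\rho_O')=p_{\varphi_1}^{\max}:=\sum_{m=1}^{d_R}p_m^{\downarrow},$$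 and this maximum is attained by every unitary $U$ for which there is an orthonormal basis $\{|\xi_m'\rangle\}_{m=1}^{d_R}$ of $\mathcal{H}_R$ with $U|\psi_m\rangle=|\varphi_1\rangle\otimes|\xi_m'\rangle$ for all $m\in\{1,\dots,d_R\}$.
   Context: The maximum is over all unitary operators on $\mathcal{H}_O\otimes\mathcal{H}_R$; $\mathrm{tr}_R$ denotes the partial trace over $\mathcal{H}_R$. *)

theory Defs
  imports "Jordan_Normal_Form.Schur_Decomposition"
begin

text \<open>The composite space C^dO (x) C^dR is identified with C^(dO*dR) via (l,m) |-> l*dR+m
  (0-based indices).  Inner product <w|v> is written  v \<bullet>c w.\<close>

definition onb :: "nat \<Rightarrow> (nat \<Rightarrow> complex vec) \<Rightarrow> bool" where
  "onb n vs \<longleftrightarrow> (\<forall>i<n. vs i \<in> carrier_vec n) \<and>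
     (\<forall>i<n. \<forall>j<n. vs i \<bullet>c vs j = (if i = j then 1 else 0))"

definition spec_mat :: "nat \<Rightarrow> (nat \<Rightarrow> real) \<Rightarrow> (nat \<Rightarrow> complex vec) \<Rightarrow> complex mat" where
  "spec_mat n c vs = mat n n (\<lambda>(i,j). \<Sum>m<n. complex_of_real (c m) * (vs m $ i) * cnj (vs m $ j))"

text \<open>Gibbs state e^{-beta H}/tr e^{-beta H} of H = spec_mat n lam vs (functional calculus
  via the spectral decomposition).\<close>
definition gibbs_weights :: "nat \<Rightarrow> real \<Rightarrow> (nat \<Rightarrow> real) \<Rightarrow> nat \<Rightarrow> real" where
  "gibbs_weights n \<beta> lam = (\<lambda>m. exp (- \<beta> * lam m) / (\<Sum>k<n. exp (- \<beta> * lam k)))"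

definition gibbs_state :: "nat \<Rightarrow> real \<Rightarrow> (nat \<Rightarrow> real) \<Rightarrow> (nat \<Rightarrow> complex vec) \<Rightarrow> complex mat" where
  "gibbs_state n \<beta> lam vs = spec_mat n (gibbs_weights n \<beta> lam) vs"

definition tensor_vec :: "complex vec \<Rightarrow> complex vec \<Rightarrow> complex vec" where
  "tensor_vec v w = vec (dim_vec v * dim_vec w)
     (\<lambda>k. v $ (k div dim_vec w) * w $ (k mod dim_vec w))"

definition tensor_mat :: "complex mat \<Rightarrow> complex mat \<Rightarrow> complex mat" where
  "tensor_mat A B = mat (dim_row A * dim_row B) (dim_col A * dim_col B)
     (\<lambda>(i,j). A $$ (i div dim_row B, j div dim_col B) * B $$ (i mod dim_row B, j mod dim_col B))"

definition partial_trace_R :: "nat \<Rightarrow> nat \<Rightarrow> complex mat \<Rightarrow> complex mat" where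
  "partial_trace_R dO dR A = mat dO dO (\<lambda>(i,j). \<Sum>m<dR. A $$ (i * dR + m, j * dR + m))"

definition unitary_mat :: "nat \<Rightarrow> complex mat \<Rightarrow> bool" where
  "unitary_mat n U \<longleftrightarrow> U \<in> carrier_mat n n \<and> U * mat_adjoint U = 1\<^sub>m n \<and> mat_adjoint U * U = 1\<^sub>m n"

text \<open>Probability <phi|A|phi> (real part; the value is real for Hermitian A).\<close>
definition prob_in :: "complex vec \<Rightarrow> complex mat \<Rightarrow> real" where
  "prob_in \<phi> A = Re ((A *\<^sub>v \<phi>) \<bullet>c \<phi>)"

end

theory Submission
  imports Defs
begin

text \<open>
  Write \<open>\<rho> = \<Sum>\<^sub>n p\<^sub>n |\<psi>\<^sub>n\<rangle>\<langle>\<psi>\<^sub>n|\<close>. Since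
  \<open>\<langle>\<phi>|tr\<^sub>R A|\<phi>\<rangle> = \<Sum>\<^sub>m \<langle>\<phi>\<otimes>e\<^sub>m|A|\<phi>\<otimes>e\<^sub>m\<rangle>\<close>, the target probability is
  \<open>\<Sum>\<^sub>n p\<^sub>n c\<^sub>n\<close>, where \<open>c\<^sub>n\<close> is the squared norm of the projection of \<open>U\<psi>\<^sub>n\<close> onto the
  \<open>d\<^sub>R\<close>-dimensional subspace \<open>\<phi>\<otimes>\<H>\<^sub>R\<close>. Thus \<open>0 \<le> c\<^sub>n \<le> 1\<close>, and as \<open>(U\<psi>\<^sub>n)\<^sub>n\<close> is an
  orthonormal basis, \<open>\<Sum>\<^sub>n c\<^sub>n = d\<^sub>R\<close>. For non-increasing \<open>p\<close> such a weighted sum is at most the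
  sum of the \<open>d\<^sub>R\<close> largest weights, with equality when \<open>c\<^sub>n = 1\<close> for \<open>n < d\<^sub>R\<close>, i.e. when
  \<open>U\<close> maps the first \<open>d\<^sub>R\<close> vectors \<open>\<psi>\<^sub>n\<close> into \<open>\<phi>\<otimes>\<H>\<^sub>R\<close>.
\<close>

lemma sum_lessThan_mult:
  fixes f :: "nat \<Rightarrow> 'a::comm_monoid_add"
  shows "(\<Sum>k<a * b. f k) = (\<Sum>i<a. \<Sum>j<b. f (i * b + j))"
proof -
  have "(\<Sum>k<a * b. f k) = (\<Sum>i<a. \<Sum>k\<in>{i * b..<i * b + b}. f k)"
    by (rule sum.nat_group[symmetric])
  also have "\<dots> = (\<Sum>i<a. \<Sum>j<b. f (i * b + j))"
    by (rule sum.cong[OF refl]) (subst sum.atLeastLessThan_shift_0, simp add: lessThan_atLeast0 comp_def)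
  finally show ?thesis .
qed

lemma mult_add_less_mult: "i < a \<Longrightarrow> j < b \<Longrightarrow> i * b + j < a * (b::nat)"
  by (metis add_mult_distrib less_le_trans mult_1 mult_le_mono1 Suc_leI add.commute
      nat_add_left_cancel_less plus_1_eq_Suc)

lemma sum_product_swap:
  fixes x y :: "nat \<Rightarrow> 'a::comm_semiring_0"
  shows "(\<Sum>c<N. (\<Sum>n<K. x n * f n c) * (\<Sum>n'<L. y n' * g n' c))
       = (\<Sum>n<K. \<Sum>n'<L. x n * y n' * (\<Sum>c<N. f n c * g n' c))"
proof -
  have "(\<Sum>c<N. (\<Sum>n<K. x n * f n c) * (\<Sum>n'<L. y n' * g n' c))
      = (\<Sum>c<N. \<Sum>n<K. \<Sum>n'<L. x n * y n' * (f n c * g n' c))"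
    by (simp add: sum_product mult_ac)
  also have "\<dots> = (\<Sum>n<K. \<Sum>n'<L. \<Sum>c<N. x n * y n' * (f n c * g n' c))"
    by (subst sum.swap) (intro sum.cong refl sum.swap)
  finally show ?thesis by (simp add: sum_distrib_left)
qed

lemma cscalar_prod_eq_sum:
  "v \<in> carrier_vec n \<Longrightarrow> w \<in> carrier_vec n \<Longrightarrow> v \<bullet>c w = (\<Sum>i<n. v $ i * cnj (w $ i))"
  unfolding scalar_prod_def by (auto intro!: sum.cong simp: lessThan_atLeast0)

lemma cscalar_prod_self:
  assumes "v \<in> carrier_vec n"
  shows "v \<bullet>c v = of_real (\<Sum>i<n. (cmod (v $ i))\<^sup>2)"
  unfolding cscalar_prod_eq_sum[OF assms assms] of_real_sum complex_norm_square ..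

lemma cscalar_prod_swap:
  "v \<in> carrier_vec n \<Longrightarrow> w \<in> carrier_vec n \<Longrightarrow> w \<bullet>c v = cnj (v \<bullet>c w)"
  by (simp add: cscalar_prod_eq_sum mult.commute)

lemma cscalar_prod_unit_vec: "m < n \<Longrightarrow> (v :: complex vec) \<bullet>c unit_vec n m = v $ m"
proof -
  assume "m < n"
  moreover have "conjugate (unit_vec n m :: complex vec) = unit_vec n m"
    by (rule eq_vecI) (simp_all add: unit_vec_def)
  ultimately show ?thesis by (simp add: scalar_prod_right_unit)
qed

lemma mult_mat_vec_eq_sum:
  "A \<in> carrier_mat m n \<Longrightarrow> x \<in> carrier_vec n \<Longrightarrow> a < m \<Longrightarrow>
    (A *\<^sub>v x) $ a = (\<Sum>c<n. A $$ (a, c) * x $ c)"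
  by (auto simp: scalar_prod_def lessThan_atLeast0 intro!: sum.cong)

lemma cscalar_prod_mult_mat_vec:
  "A \<in> carrier_mat n n \<Longrightarrow> v \<in> carrier_vec n \<Longrightarrow> w \<in> carrier_vec n \<Longrightarrow>
    (A *\<^sub>v v) \<bullet>c w = (\<Sum>a<n. \<Sum>b<n. A $$ (a, b) * v $ b * cnj (w $ a))"
  by (simp add: cscalar_prod_eq_sum[of _ n] mult_mat_vec_eq_sum sum_distrib_right
      del: index_mult_mat_vec)

lemma mat_adjoint_eq_mat:
  "mat_adjoint A = mat (dim_col A) (dim_row A) (\<lambda>(i, j). cnj (A $$ (j, i)))"
  unfolding mat_adjoint_def mat_of_rows_def by (rule eq_matI) (auto simp: cols_def)

lemma tensor_vec_carrier:
  "v \<in> carrier_vec a \<Longrightarrow> w \<in> carrier_vec b \<Longrightarrow> tensor_vec v w \<in> carrier_vec (a * b)"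
  unfolding tensor_vec_def carrier_vec_def by simp

lemma tensor_vec_index:
  "v \<in> carrier_vec a \<Longrightarrow> w \<in> carrier_vec b \<Longrightarrow> i < a \<Longrightarrow> j < b \<Longrightarrow>
    tensor_vec v w $ (i * b + j) = v $ i * w $ j"
  unfolding tensor_vec_def by (simp add: mult_add_less_mult)

lemma tensor_vec_index_div_mod:
  "v \<in> carrier_vec a \<Longrightarrow> w \<in> carrier_vec b \<Longrightarrow> k < a * b \<Longrightarrow>
    tensor_vec v w $ k = v $ (k div b) * w $ (k mod b)"
  unfolding tensor_vec_def by simp

lemma cscalar_prod_tensor_vec:
  assumes "v \<in> carrier_vec a" "v' \<in> carrier_vec a" "w \<in> carrier_vec b" "w' \<in> carrier_vec b"
  shows "tensor_vec v w \<bullet>c tensor_vec v' w' = (v \<bullet>c v') * (w \<bullet>c w')"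
proof -
  have "tensor_vec v w \<bullet>c tensor_vec v' w' = (\<Sum>i<a. \<Sum>j<b. (v $ i * cnj (v' $ i)) * (w $ j * cnj (w' $ j)))"
    using assms by (simp add: cscalar_prod_eq_sum[of _ "a * b"] tensor_vec_carrier sum_lessThan_mult
        tensor_vec_index mult_ac)
  then show ?thesis
    using assms by (simp add: cscalar_prod_eq_sum sum_product)
qed

lemma onb_carrier: "onb n v \<Longrightarrow> k < n \<Longrightarrow> v k \<in> carrier_vec n"
  unfolding onb_def by auto

lemma onb_cscalar_prod: "onb n v \<Longrightarrow> i < n \<Longrightarrow> j < n \<Longrightarrow> v i \<bullet>c v j = (if i = j then 1 else 0)"
  unfolding onb_def by blast

lemma onb_orthonormal_sum:
  assumes "onb n v" "i < n" "j < n"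
  shows "(\<Sum>c<n. v i $ c * cnj (v j $ c)) = (if i = j then 1 else 0)"
  using onb_cscalar_prod[OF assms] cscalar_prod_eq_sum[OF onb_carrier[OF assms(1,2)] onb_carrier[OF assms(1,3)]]
  by simp

text \<open>The matrix with columns \<open>v k\<close> has a left inverse, hence also a right inverse.\<close>

lemma onb_completeness:
  assumes "onb n v" "a < n" "b < n"
  shows "(\<Sum>k<n. v k $ a * cnj (v k $ b)) = (if a = b then 1 else 0)"
proof -
  define M :: "complex mat" where "M = mat n n (\<lambda>(i, k). v k $ i)"
  define M' :: "complex mat" where "M' = mat n n (\<lambda>(k, i). cnj (v k $ i))"
  have "M' * M = 1\<^sub>m n"
  proof (rule eq_matI)
    fix k k' assume "k < dim_row (1\<^sub>m n :: complex mat)" "k' < dim_col (1\<^sub>m n :: complex mat)"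
    then have kk: "k < n" "k' < n" by auto
    have "(M' * M) $$ (k, k') = (\<Sum>i<n. v k' $ i * cnj (v k $ i))"
      using kk by (simp add: M_def M'_def scalar_prod_def lessThan_atLeast0 mult.commute)
    also have "\<dots> = 1\<^sub>m n $$ (k, k')"
      using kk assms(1) by (simp add: onb_orthonormal_sum)
    finally show "(M' * M) $$ (k, k') = 1\<^sub>m n $$ (k, k')" .
  qed (simp_all add: M_def M'_def)
  then have "M * M' = 1\<^sub>m n"
    by (rule mat_mult_left_right_inverse[of M' n M, rotated 2]) (simp_all add: M_def M'_def)
  then have "(M * M') $$ (a, b) = 1\<^sub>m n $$ (a, b)" by simp
  then show ?thesis
    using assms(2,3) by (simp add: M_def M'_def scalar_prod_def lessThan_atLeast0)
qed

lemma onb_parseval: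
  assumes e: "onb n e" and x: "x \<in> carrier_vec n"
  shows "(\<Sum>k<n. (cmod (x \<bullet>c e k))\<^sup>2) = (\<Sum>i<n. (cmod (x $ i))\<^sup>2)"
proof -
  have "complex_of_real (\<Sum>k<n. (cmod (x \<bullet>c e k))\<^sup>2) = (\<Sum>k<n. (x \<bullet>c e k) * cnj (x \<bullet>c e k))"
    unfolding of_real_sum complex_norm_square ..
  also have "\<dots> = (\<Sum>k<n. (\<Sum>i<n. x $ i * cnj (e k $ i)) * (\<Sum>j<n. cnj (x $ j) * e k $ j))"
    using e x by (intro sum.cong refl) (simp add: cscalar_prod_eq_sum onb_carrier)
  also have "\<dots> = (\<Sum>i<n. \<Sum>j<n. x $ i * cnj (x $ j) * (\<Sum>k<n. e k $ j * cnj (e k $ i)))"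
    by (subst sum_product_swap) (simp add: mult.commute)
  also have "\<dots> = (\<Sum>i<n. x $ i * cnj (x $ i))"
    using e by (simp add: onb_completeness if_distrib[where f="\<lambda>t. _ * t"] cong: if_cong)
  also have "\<dots> = complex_of_real (\<Sum>i<n. (cmod (x $ i))\<^sup>2)"
    unfolding of_real_sum complex_norm_square ..
  finally show ?thesis by (simp only: of_real_eq_iff)
qed

lemma onb_parseval_unit:
  assumes "onb n e" "x \<in> carrier_vec n" "x \<bullet>c x = 1"
  shows "(\<Sum>k<n. (cmod (x \<bullet>c e k))\<^sup>2) = 1"
  using cscalar_prod_self[OF assms(2)] assms(3) onb_parseval[OF assms(1,2)] by (metis of_real_eq_1_iff)

lemma onb_unit_vec: "onb n (\<lambda>k. unit_vec n k)"
  unfolding onb_def by (simp add: cscalar_prod_unit_vec)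

lemma bij_betw_div_mod: "bij_betw (\<lambda>n. (n div b, n mod b)) {..<a * b} ({..<a} \<times> {..<b::nat})"
proof (rule bij_betw_byWitness[where f' = "\<lambda>(i, j). i * b + j"])
qed (auto simp: mult_add_less_mult less_mult_imp_div_less intro!: mod_less_divisor gr0I)

lemma onb_tensor_vec:
  assumes f: "onb a f" and g: "onb b g" and \<sigma>: "bij_betw \<sigma> {..<a * b} ({..<a} \<times> {..<b})"
  shows "onb (a * b) (\<lambda>n. tensor_vec (f (fst (\<sigma> n))) (g (snd (\<sigma> n))))"
proof -
  have \<sigma>_lt: "fst (\<sigma> n) < a \<and> snd (\<sigma> n) < b" if "n < a * b" for n
    using bij_betwE[OF \<sigma>] that by (metis lessThan_iff mem_Times_iff)
  have \<sigma>_eq: "\<sigma> i = \<sigma> j \<longleftrightarrow> i = j" if "i < a * b" "j < a * b" for i j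
    using \<sigma> that unfolding bij_betw_def inj_on_def by auto
  show ?thesis
    unfolding onb_def
  proof (intro conjI allI impI)
    fix i j assume i: "i < a * b" and j: "j < a * b"
    show "tensor_vec (f (fst (\<sigma> i))) (g (snd (\<sigma> i))) \<in> carrier_vec (a * b)"
      using \<sigma>_lt[OF i] f g by (simp add: tensor_vec_carrier onb_carrier)
    show "tensor_vec (f (fst (\<sigma> i))) (g (snd (\<sigma> i))) \<bullet>c tensor_vec (f (fst (\<sigma> j))) (g (snd (\<sigma> j)))
        = (if i = j then 1 else 0)"
      using \<sigma>_lt[OF i] \<sigma>_lt[OF j] \<sigma>_eq[OF i j] f g
      by (auto simp: cscalar_prod_tensor_vec[of _ a _ _ b] onb_carrier onb_cscalar_prod prod_eq_iff)
  qed
qed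

lemma unitary_mat_cscalar_prod:
  assumes U: "unitary_mat N U" and x: "x \<in> carrier_vec N" and y: "y \<in> carrier_vec N"
  shows "(U *\<^sub>v x) \<bullet>c (U *\<^sub>v y) = x \<bullet>c y"
proof -
  have UC: "U \<in> carrier_mat N N" and UU: "mat_adjoint U * U = 1\<^sub>m N"
    using U unfolding unitary_mat_def by auto
  have cols: "(\<Sum>a<N. U $$ (a, c) * cnj (U $$ (a, d))) = (if d = c then 1 else 0)"
    if "c < N" "d < N" for c d
  proof -
    have "(mat_adjoint U * U) $$ (d, c) = (\<Sum>a<N. U $$ (a, c) * cnj (U $$ (a, d)))"
      using that UC by (simp add: mat_adjoint_eq_mat scalar_prod_def lessThan_atLeast0 mult.commute)
    then show ?thesis using UU that by simp
  qed
  have "(U *\<^sub>v x) \<bullet>c (U *\<^sub>v y) = (\<Sum>a<N. (U *\<^sub>v x) $ a * cnj ((U *\<^sub>v y) $ a))"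
    using UC x y by (simp add: cscalar_prod_eq_sum[of _ N] del: index_mult_mat_vec)
  also have "\<dots> = (\<Sum>a<N. (\<Sum>c<N. x $ c * U $$ (a, c)) * (\<Sum>d<N. cnj (y $ d) * cnj (U $$ (a, d))))"
    by (intro sum.cong refl, simp only: lessThan_iff mult_mat_vec_eq_sum[OF UC x]
        mult_mat_vec_eq_sum[OF UC y] cnj_sum complex_cnj_mult mult.commute)
  also have "\<dots> = (\<Sum>c<N. \<Sum>d<N. x $ c * cnj (y $ d) * (\<Sum>a<N. U $$ (a, c) * cnj (U $$ (a, d))))"
    by (rule sum_product_swap)
  also have "\<dots> = x \<bullet>c y"
    using x y by (simp add: cols if_distrib[where f="\<lambda>t. _ * t"] cscalar_prod_eq_sum cong: if_cong)
  finally show ?thesis .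
qed

lemma onb_unitary_image:
  assumes U: "unitary_mat N U" and \<psi>: "onb N \<psi>"
  shows "onb N (\<lambda>n. U *\<^sub>v \<psi> n)"
proof -
  have "U \<in> carrier_mat N N" using U unfolding unitary_mat_def by simp
  then show ?thesis
    using \<psi> unfolding onb_def by (simp add: unitary_mat_cscalar_prod[OF U])
qed

lemma unitary_mat_from_onb:
  assumes \<psi>: "onb N \<psi>" and \<chi>: "onb N \<chi>"
  shows "\<exists>U. unitary_mat N U \<and> (\<forall>k<N. U *\<^sub>v \<psi> k = \<chi> k)"
proof (intro exI conjI allI impI)
  define U where "U = mat N N (\<lambda>(a, b). \<Sum>n<N. \<chi> n $ a * cnj (\<psi> n $ b))"
  have UC: "U \<in> carrier_mat N N" unfolding U_def by simp
  have "mat_adjoint U * U = 1\<^sub>m N"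
  proof (rule eq_matI)
    fix a b assume "a < dim_row (1\<^sub>m N :: complex mat)" "b < dim_col (1\<^sub>m N :: complex mat)"
    then have ab: "a < N" "b < N" by auto
    have "(mat_adjoint U * U) $$ (a, b)
        = (\<Sum>c<N. (\<Sum>n<N. \<psi> n $ a * cnj (\<chi> n $ c)) * (\<Sum>n'<N. cnj (\<psi> n' $ b) * \<chi> n' $ c))"
      using ab by (simp add: U_def mat_adjoint_eq_mat scalar_prod_def lessThan_atLeast0 mult.commute)
    also have "\<dots> = (\<Sum>n<N. \<Sum>n'<N. \<psi> n $ a * cnj (\<psi> n' $ b) * (\<Sum>c<N. \<chi> n' $ c * cnj (\<chi> n $ c)))"
      by (subst sum_product_swap) (simp add: mult.commute)
    also have "\<dots> = 1\<^sub>m N $$ (a, b)"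
      using \<chi> \<psi> ab by (simp add: onb_orthonormal_sum onb_completeness if_distrib[where f="\<lambda>t. _ * t"]
          cong: if_cong)
    finally show "(mat_adjoint U * U) $$ (a, b) = 1\<^sub>m N $$ (a, b)" .
  qed (simp_all add: U_def mat_adjoint_eq_mat)
  moreover from this have "U * mat_adjoint U = 1\<^sub>m N"
    by (rule mat_mult_left_right_inverse[rotated 2]) (simp_all add: U_def mat_adjoint_eq_mat)
  ultimately show "unitary_mat N U"
    unfolding unitary_mat_def using UC by simp
  fix k assume k: "k < N"
  show "U *\<^sub>v \<psi> k = \<chi> k"
  proof (rule eq_vecI)
    fix a assume "a < dim_vec (\<chi> k)"
    then have a: "a < N" using onb_carrier[OF \<chi> k] by simp
    have "(U *\<^sub>v \<psi> k) $ a = (\<Sum>b<N. (\<Sum>n<N. \<chi> n $ a * cnj (\<psi> n $ b)) * \<psi> k $ b)"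
      using a k \<psi> by (simp add: U_def mult_mat_vec_eq_sum[of _ N N] onb_carrier del: index_mult_mat_vec)
    also have "\<dots> = (\<Sum>b<N. \<Sum>n<N. \<chi> n $ a * (\<psi> k $ b * cnj (\<psi> n $ b)))"
      by (simp add: sum_distrib_left sum_distrib_right mult_ac)
    also have "\<dots> = (\<Sum>n<N. \<chi> n $ a * (\<Sum>b<N. \<psi> k $ b * cnj (\<psi> n $ b)))"
      by (subst sum.swap) (simp add: sum_distrib_left)
    also have "\<dots> = \<chi> k $ a"
      using k \<psi> by (simp add: onb_orthonormal_sum if_distrib[where f="\<lambda>t. _ * t"] cong: if_cong)
    finally show "(U *\<^sub>v \<psi> k) $ a = \<chi> k $ a" .
  qed (use onb_carrier[OF \<chi> k] UC in simp_all)
qed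

lemma sum_swap_3:
  "(\<Sum>a<A. \<Sum>b<B. \<Sum>k<K. f a b k) = (\<Sum>k<K. \<Sum>a<A. \<Sum>b<B. f a b k)"
proof -
  have "(\<Sum>a<A. \<Sum>b<B. \<Sum>k<K. f a b k) = (\<Sum>a<A. \<Sum>k<K. \<Sum>b<B. f a b k)"
    by (intro sum.cong refl sum.swap)
  also have "\<dots> = (\<Sum>k<K. \<Sum>a<A. \<Sum>b<B. f a b k)"
    by (rule sum.swap)
  finally show ?thesis .
qed

definition mixture_mat :: "nat \<Rightarrow> nat \<Rightarrow> (nat \<Rightarrow> real) \<Rightarrow> (nat \<Rightarrow> complex vec) \<Rightarrow> complex mat" where
  "mixture_mat N K q x = mat N N (\<lambda>(i, j). \<Sum>k<K. complex_of_real (q k) * x k $ i * cnj (x k $ j))"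

lemma mixture_mat_carrier: "mixture_mat N K q x \<in> carrier_mat N N"
  unfolding mixture_mat_def by simp

lemma tensor_mat_spec_mat:
  assumes \<phi>: "onb dO \<phi>" and \<xi>: "onb dR \<xi>" and \<sigma>: "bij_betw \<sigma> {..<dO * dR} ({..<dO} \<times> {..<dR})"
  shows "tensor_mat (spec_mat dO c \<phi>) (spec_mat dR r \<xi>)
    = mixture_mat (dO * dR) (dO * dR) (\<lambda>n. c (fst (\<sigma> n)) * r (snd (\<sigma> n)))
        (\<lambda>n. tensor_vec (\<phi> (fst (\<sigma> n))) (\<xi> (snd (\<sigma> n))))" (is "?L = ?R")
proof (rule eq_matI)
  fix a b assume "a < dim_row ?R" "b < dim_col ?R"
  then have ab: "a < dO * dR" "b < dO * dR" by (auto simp: mixture_mat_def)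
  then have dR: "0 < dR" by (cases dR) auto
  define F where "F l m = complex_of_real (c l * r m) * (\<phi> l $ (a div dR) * \<xi> m $ (a mod dR))
       * cnj (\<phi> l $ (b div dR) * \<xi> m $ (b mod dR))" for l m
  have "?L $$ (a, b)
     = (\<Sum>l<dO. complex_of_real (c l) * \<phi> l $ (a div dR) * cnj (\<phi> l $ (b div dR)))
     * (\<Sum>m<dR. complex_of_real (r m) * \<xi> m $ (a mod dR) * cnj (\<xi> m $ (b mod dR)))"
    using ab dR by (simp add: tensor_mat_def spec_mat_def less_mult_imp_div_less)
  also have "\<dots> = (\<Sum>(l, m)\<in>{..<dO} \<times> {..<dR}. F l m)"
    unfolding F_def sum.cartesian_product[symmetric] by (simp add: sum_product mult_ac)
  also have "\<dots> = (\<Sum>n<dO * dR. F (fst (\<sigma> n)) (snd (\<sigma> n)))"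
    by (subst sum.reindex_bij_betw[symmetric, OF \<sigma>]) (simp add: case_prod_beta)
  also have "\<dots> = ?R $$ (a, b)"
  proof -
    have "fst (\<sigma> n) < dO \<and> snd (\<sigma> n) < dR" if "n < dO * dR" for n
      using bij_betwE[OF \<sigma>] that by (metis lessThan_iff mem_Times_iff)
    then show ?thesis
      using ab \<phi> \<xi> unfolding F_def mixture_mat_def
      by (auto simp: tensor_vec_index_div_mod[of _ dO _ dR] onb_carrier intro!: sum.cong)
  qed
  finally show "?L $$ (a, b) = ?R $$ (a, b)" .
qed (simp_all add: tensor_mat_def spec_mat_def mixture_mat_def)

lemma conj_mixture_mat:
  assumes U: "U \<in> carrier_mat N N" and x: "\<And>k. k < K \<Longrightarrow> x k \<in> carrier_vec N"
  shows "U * mixture_mat N K q x * mat_adjoint U = mixture_mat N K q (\<lambda>k. U *\<^sub>v x k)" (is "?L = ?R")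
proof (rule eq_matI)
  fix a b assume "a < dim_row ?R" "b < dim_col ?R"
  then have a: "a < N" and b: "b < N" by (auto simp: mixture_mat_def)
  let ?T = "\<lambda>d c k. complex_of_real (q k) * (U $$ (a, c) * x k $ c) * (cnj (U $$ (b, d)) * cnj (x k $ d))"
  have "?L $$ (a, b) = (\<Sum>d<N. (\<Sum>c<N. U $$ (a, c) * (\<Sum>k<K. complex_of_real (q k) * x k $ c * cnj (x k $ d))) * cnj (U $$ (b, d)))"
    using a b U by (simp add: mixture_mat_def mat_adjoint_eq_mat scalar_prod_def lessThan_atLeast0)
  also have "\<dots> = (\<Sum>d<N. \<Sum>c<N. \<Sum>k<K. ?T d c k)"
    by (simp add: sum_distrib_left sum_distrib_right mult_ac)
  also have "\<dots> = (\<Sum>k<K. \<Sum>c<N. \<Sum>d<N. ?T d c k)"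
    by (subst sum_swap_3) (intro sum.cong refl sum.swap)
  also have "\<dots> = (\<Sum>k<K. complex_of_real (q k) * (\<Sum>c<N. U $$ (a, c) * x k $ c) * cnj (\<Sum>d<N. U $$ (b, d) * x k $ d))"
    by (simp add: sum_product sum_distrib_left mult_ac)
  also have "\<dots> = ?R $$ (a, b)"
    using a b U x by (simp add: mixture_mat_def mult_mat_vec_eq_sum[of _ N N] del: index_mult_mat_vec)
  finally show "?L $$ (a, b) = ?R $$ (a, b)" .
qed (use U in \<open>simp_all add: mixture_mat_def mat_adjoint_eq_mat\<close>)

lemma cscalar_prod_mixture_mat:
  assumes w: "w \<in> carrier_vec N" and x: "\<And>k. k < K \<Longrightarrow> x k \<in> carrier_vec N"
  shows "(mixture_mat N K q x *\<^sub>v w) \<bullet>c w = of_real (\<Sum>k<K. q k * (cmod (x k \<bullet>c w))\<^sup>2)"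
proof -
  have "(mixture_mat N K q x *\<^sub>v w) \<bullet>c w
      = (\<Sum>a<N. \<Sum>b<N. (\<Sum>k<K. complex_of_real (q k) * x k $ a * cnj (x k $ b)) * w $ b * cnj (w $ a))"
    unfolding cscalar_prod_mult_mat_vec[OF mixture_mat_carrier w w]
    by (intro sum.cong refl) (simp add: mixture_mat_def)
  also have "\<dots> = (\<Sum>a<N. \<Sum>b<N. \<Sum>k<K.
      complex_of_real (q k) * (x k $ a * cnj (w $ a)) * (cnj (x k $ b) * w $ b))"
    by (simp add: sum_distrib_left sum_distrib_right mult_ac)
  also have "\<dots> = (\<Sum>k<K. complex_of_real (q k) * ((x k \<bullet>c w) * cnj (x k \<bullet>c w)))"
    using w x by (subst sum_swap_3)
      (intro sum.cong refl, simp add: cscalar_prod_eq_sum[of _ N] sum_product sum_distrib_left mult_ac)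
  also have "\<dots> = of_real (\<Sum>k<K. q k * (cmod (x k \<bullet>c w))\<^sup>2)"
    unfolding of_real_sum of_real_mult complex_norm_square ..
  finally show ?thesis .
qed

lemma sum_tensor_vec_unit_vec:
  fixes g :: "complex \<Rightarrow> complex"
  assumes "\<phi> \<in> carrier_vec a" "m < b" "g 0 = 0"
  shows "(\<Sum>k<a * b. f k * g (tensor_vec \<phi> (unit_vec b m) $ k)) = (\<Sum>i<a. f (i * b + m) * g (\<phi> $ i))"
  using assms by (simp add: sum_lessThan_mult tensor_vec_index unit_vec_def if_distrib cong: if_cong)

lemma cscalar_prod_partial_trace_R:
  assumes A: "A \<in> carrier_mat (dO * dR) (dO * dR)" and \<phi>: "\<phi> \<in> carrier_vec dO"
  shows "(partial_trace_R dO dR A *\<^sub>v \<phi>) \<bullet>c \<phi>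
    = (\<Sum>m<dR. (A *\<^sub>v tensor_vec \<phi> (unit_vec dR m)) \<bullet>c tensor_vec \<phi> (unit_vec dR m))"
proof -
  have P: "partial_trace_R dO dR A \<in> carrier_mat dO dO" by (simp add: partial_trace_R_def)
  have "(partial_trace_R dO dR A *\<^sub>v \<phi>) \<bullet>c \<phi>
      = (\<Sum>i<dO. \<Sum>j<dO. (\<Sum>m<dR. A $$ (i * dR + m, j * dR + m)) * \<phi> $ j * cnj (\<phi> $ i))"
    unfolding cscalar_prod_mult_mat_vec[OF P \<phi> \<phi>] by (intro sum.cong refl) (simp add: partial_trace_R_def)
  also have "\<dots> = (\<Sum>m<dR. \<Sum>i<dO. \<Sum>j<dO. A $$ (i * dR + m, j * dR + m) * \<phi> $ j * cnj (\<phi> $ i))"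
    unfolding sum_distrib_right by (rule sum_swap_3)
  also have "\<dots> = (\<Sum>m<dR. (A *\<^sub>v tensor_vec \<phi> (unit_vec dR m)) \<bullet>c tensor_vec \<phi> (unit_vec dR m))"
  proof (intro sum.cong refl)
    fix m assume "m \<in> {..<dR}"
    then have m: "m < dR" by simp
    have w: "tensor_vec \<phi> (unit_vec dR m) \<in> carrier_vec (dO * dR)"
      using \<phi> by (simp add: tensor_vec_carrier)
    show "(\<Sum>i<dO. \<Sum>j<dO. A $$ (i * dR + m, j * dR + m) * \<phi> $ j * cnj (\<phi> $ i))
        = (A *\<^sub>v tensor_vec \<phi> (unit_vec dR m)) \<bullet>c tensor_vec \<phi> (unit_vec dR m)"
      unfolding cscalar_prod_mult_mat_vec[OF A w w]
      using sum_tensor_vec_unit_vec[OF \<phi> m, where g = "\<lambda>z. z"] sum_tensor_vec_unit_vec[OF \<phi> m, where g = cnj]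
      by (simp add: sum_distrib_right[symmetric])
  qed
  finally show ?thesis .
qed

definition proj_weight :: "nat \<Rightarrow> (nat \<Rightarrow> complex vec) \<Rightarrow> complex vec \<Rightarrow> real" where
  "proj_weight K e y = (\<Sum>k<K. (cmod (y \<bullet>c e k))\<^sup>2)"

lemma prob_in_partial_trace_R_mixture_mat:
  assumes \<phi>: "\<phi> \<in> carrier_vec dO" and y: "\<And>k. k < K \<Longrightarrow> y k \<in> carrier_vec (dO * dR)"
  shows "prob_in \<phi> (partial_trace_R dO dR (mixture_mat (dO * dR) K q y))
    = (\<Sum>k<K. q k * proj_weight dR (\<lambda>m. tensor_vec \<phi> (unit_vec dR m)) (y k))"
proof -
  have "(partial_trace_R dO dR (mixture_mat (dO * dR) K q y) *\<^sub>v \<phi>) \<bullet>c \<phi>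
      = (\<Sum>m<dR. of_real (\<Sum>k<K. q k * (cmod (y k \<bullet>c tensor_vec \<phi> (unit_vec dR m)))\<^sup>2))"
    using \<phi> y by (simp add: cscalar_prod_partial_trace_R mixture_mat_carrier cscalar_prod_mixture_mat
        tensor_vec_carrier)
  also have "\<dots> = of_real (\<Sum>k<K. q k * proj_weight dR (\<lambda>m. tensor_vec \<phi> (unit_vec dR m)) (y k))"
    unfolding proj_weight_def of_real_sum[symmetric] sum_distrib_left by (rule arg_cong[OF sum.swap])
  finally show ?thesis unfolding prob_in_def by simp
qed

lemma proj_weight_nonneg: "0 \<le> proj_weight K e y"
  unfolding proj_weight_def by (simp add: sum_nonneg)

lemma proj_weight_le_1:
  assumes e: "onb N e" and K: "K \<le> N" and y: "y \<in> carrier_vec N" "y \<bullet>c y = 1"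
  shows "proj_weight K e y \<le> 1"
proof -
  have "proj_weight K e y \<le> (\<Sum>k<N. (cmod (y \<bullet>c e k))\<^sup>2)"
    unfolding proj_weight_def using K by (intro sum_mono2) auto
  also have "\<dots> = 1" by (rule onb_parseval_unit[OF e y])
  finally show ?thesis .
qed

lemma sum_proj_weight_onb:
  assumes e: "onb N e" and f: "onb N f" and K: "K \<le> N"
  shows "(\<Sum>n<N. proj_weight K e (f n)) = real K"
proof -
  have "(\<Sum>n<N. proj_weight K e (f n)) = (\<Sum>k<K. \<Sum>n<N. (cmod (e k \<bullet>c f n))\<^sup>2)"
  proof -
    have swap: "cmod (f n \<bullet>c e k) = cmod (e k \<bullet>c f n)" if "k < K" "n < N" for k n
      using cscalar_prod_swap[OF onb_carrier[OF e] onb_carrier[OF f]] that K by simp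
    show ?thesis
      unfolding proj_weight_def by (subst sum.swap) (intro sum.cong refl; simp add: swap)
  qed
  also have "\<dots> = (\<Sum>k<K. 1)"
    using K e f by (intro sum.cong refl onb_parseval_unit) (auto simp: onb_carrier onb_cscalar_prod)
  finally show ?thesis by simp
qed

lemma proj_weight_tensor_vec:
  assumes \<phi>: "\<phi> \<in> carrier_vec a" "\<phi> \<bullet>c \<phi> = 1" and x: "x \<in> carrier_vec b" "x \<bullet>c x = 1"
  shows "proj_weight b (\<lambda>m. tensor_vec \<phi> (unit_vec b m)) (tensor_vec \<phi> x) = 1"
proof -
  have "proj_weight b (\<lambda>m. tensor_vec \<phi> (unit_vec b m)) (tensor_vec \<phi> x) = (\<Sum>m<b. (cmod (x \<bullet>c unit_vec b m))\<^sup>2)"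
    unfolding proj_weight_def using \<phi> x by (simp add: cscalar_prod_tensor_vec[of _ a _ _ b])
  also have "\<dots> = 1" by (rule onb_parseval_unit[OF onb_unit_vec x])
  finally show ?thesis .
qed

text \<open>Bounding \<open>p\<close> by the threshold \<open>t = p (K - 1)\<close>:
  \<open>\<Sum>\<^sub>n p\<^sub>n c\<^sub>n \<le> t \<Sum>\<^sub>n c\<^sub>n + \<Sum>\<^sub>n\<^sub><\<^sub>K (p\<^sub>n - t) \<le> t K + \<Sum>\<^sub>n\<^sub><\<^sub>K (p\<^sub>n - t)\<close>.\<close>

lemma sum_mult_le_sum_lessThan:
  fixes p c :: "nat \<Rightarrow> real"
  assumes K: "K \<le> N"
    and mono: "\<And>i j. i \<le> j \<Longrightarrow> j < N \<Longrightarrow> p j \<le> p i"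
    and p_nonneg: "\<And>n. n < N \<Longrightarrow> 0 \<le> p n"
    and c01: "\<And>n. n < N \<Longrightarrow> 0 \<le> c n \<and> c n \<le> 1"
    and c_sum: "(\<Sum>n<N. c n) \<le> real K"
  shows "(\<Sum>n<N. p n * c n) \<le> (\<Sum>n<K. p n)"
proof (cases "N = 0")
  case True
  then show ?thesis using K by simp
next
  case False
  define t where "t = p (K - 1)"
  have t: "0 \<le> t" unfolding t_def using p_nonneg False K by simp
  have "p n * c n \<le> t * c n + (if n < K then p n - t else 0)" if n: "n < N" for n
  proof (cases "n < K")
    case True
    then have "t \<le> p n" unfolding t_def using mono K by simp
    then have "0 \<le> (p n - t) * (1 - c n)" using c01[OF n] by simp
    then show ?thesis using True by (simp add: algebra_simps)
  next
    case False
    then have "p n \<le> t" unfolding t_def using mono n by simp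
    then show ?thesis using False c01[OF n] by (simp add: mult_right_mono)
  qed
  then have "(\<Sum>n<N. p n * c n) \<le> (\<Sum>n<N. t * c n + (if n < K then p n - t else 0))"
    by (intro sum_mono) simp
  also have "\<dots> = t * (\<Sum>n<N. c n) + (\<Sum>n<N. if n < K then p n - t else 0)"
    by (simp add: sum.distrib sum_distrib_left)
  also have "(\<Sum>n<N. if n < K then p n - t else 0) = (\<Sum>n<K. p n) - t * real K"
  proof -
    have "{..<N} \<inter> {n. n < K} = {..<K}" using K by auto
    then show ?thesis by (simp add: sum.If_cases sum_subtractf)
  qed
  also have "t * (\<Sum>n<N. c n) \<le> t * real K" using t c_sum by (rule mult_left_mono[rotated])
  finally show ?thesis by simp
qed

lemma sum_mult_proj_weight_le:
  assumes e: "onb N e" and f: "onb N f" and K: "K \<le> N"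
    and mono: "\<And>i j. i \<le> j \<Longrightarrow> j < N \<Longrightarrow> p j \<le> p i" and p_nonneg: "\<And>n. n < N \<Longrightarrow> 0 \<le> p n"
  shows "(\<Sum>n<N. p n * proj_weight K e (f n)) \<le> (\<Sum>n<K. p n)"
proof (rule sum_mult_le_sum_lessThan[where c = "\<lambda>n. proj_weight K e (f n)", OF K])
  fix n assume "n < N"
  then show "0 \<le> proj_weight K e (f n) \<and> proj_weight K e (f n) \<le> 1"
    using e f K by (simp add: proj_weight_nonneg proj_weight_le_1 onb_carrier onb_cscalar_prod)
qed (use mono p_nonneg sum_proj_weight_onb[OF e f K] in auto)

lemma sum_mult_proj_weight_eq:
  assumes e: "onb N e" and f: "onb N f" and K: "K \<le> N"
    and top: "\<And>n. n < K \<Longrightarrow> proj_weight K e (f n) = 1"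
  shows "(\<Sum>n<N. p n * proj_weight K e (f n)) = (\<Sum>n<K. p n)"
proof -
  have split: "(\<Sum>n<N. g n) = (\<Sum>n<K. g n) + (\<Sum>n\<in>{K..<N}. g n)" for g :: "nat \<Rightarrow> real"
    using K by (simp add: lessThan_atLeast0 sum.atLeastLessThan_concat)
  have "(\<Sum>n\<in>{K..<N}. proj_weight K e (f n)) = 0"
    using split[of "\<lambda>n. proj_weight K e (f n)"] sum_proj_weight_onb[OF e f K] top by simp
  then have "\<forall>n\<in>{K..<N}. proj_weight K e (f n) = 0"
    by (simp add: sum_nonneg_eq_0_iff proj_weight_nonneg)
  then show ?thesis
    using split[of "\<lambda>n. p n * proj_weight K e (f n)"] top by simp
qed

lemma gibbs_weights_pos: "0 < n \<Longrightarrow> 0 < gibbs_weights n \<beta> lam m"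
  unfolding gibbs_weights_def by (intro divide_pos_pos exp_gt_zero sum_pos) auto

theorem lemma1:
  fixes dO dR :: nat and \<beta> :: real and lam oc :: "nat \<Rightarrow> real"
    and \<xi> \<phi> :: "nat \<Rightarrow> complex vec" and \<sigma> :: "nat \<Rightarrow> nat \<times> nat"
  assumes dO: "dO \<ge> 1" and dR: "dR \<ge> 1"
    and beta: "\<beta> > 0"
    and lam_mono: "\<forall>i j. i \<le> j \<longrightarrow> j < dR \<longrightarrow> lam i \<le> lam j"
    and xi_onb: "onb dR \<xi>"
    and phi_onb: "onb dO \<phi>"
    and o_nonneg: "\<forall>l<dO. oc l \<ge> 0"
    and o_sum: "(\<Sum>l<dO. oc l) = 1"
    and o_mono: "\<forall>i j. i \<le> j \<longrightarrow> j < dO \<longrightarrow> oc j \<le> oc i"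
    and sigma_bij: "bij_betw \<sigma> {..<dO * dR} ({..<dO} \<times> {..<dR})"
    and p_mono: "\<forall>i j. i \<le> j \<longrightarrow> j < dO * dR \<longrightarrow>
        oc (fst (\<sigma> j)) * gibbs_weights dR \<beta> lam (snd (\<sigma> j))
          \<le> oc (fst (\<sigma> i)) * gibbs_weights dR \<beta> lam (snd (\<sigma> i))"
  shows
   "let r = gibbs_weights dR \<beta> lam;
        \<rho> = tensor_mat (spec_mat dO oc \<phi>) (gibbs_state dR \<beta> lam \<xi>);
        p = (\<lambda>n. oc (fst (\<sigma> n)) * r (snd (\<sigma> n)));
        \<psi> = (\<lambda>n. tensor_vec (\<phi> (fst (\<sigma> n))) (\<xi> (snd (\<sigma> n))));
        val = (\<lambda>U. prob_in (\<phi> 0) (partial_trace_R dO dR (U * \<rho> * mat_adjoint U)));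
        pmax = (\<Sum>m<dR. p m)
    in (\<forall>U. unitary_mat (dO * dR) U \<longrightarrow> val U \<le> pmax)
     \<and> (\<exists>U. unitary_mat (dO * dR) U \<and> val U = pmax)
     \<and> (\<forall>U. unitary_mat (dO * dR) U \<longrightarrow>
           (\<exists>\<xi>'. onb dR \<xi>' \<and> (\<forall>m<dR. U *\<^sub>v \<psi> m = tensor_vec (\<phi> 0) (\<xi>' m)))
           \<longrightarrow> val U = pmax)"
proof -
  define N where "N = dO * dR"
  define p where "p = (\<lambda>n. oc (fst (\<sigma> n)) * gibbs_weights dR \<beta> lam (snd (\<sigma> n)))"
  define \<psi> where "\<psi> = (\<lambda>n. tensor_vec (\<phi> (fst (\<sigma> n))) (\<xi> (snd (\<sigma> n))))"
  define w where "w = (\<lambda>m. tensor_vec (\<phi> 0) (unit_vec dR m))"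
  \<comment> \<open>An orthonormal basis whose first \<open>dR\<close> vectors are the \<open>w m\<close>, spanning \<open>\<phi> 0 \<otimes> \<H>\<^sub>R\<close>.\<close>
  define \<chi> where "\<chi> = (\<lambda>n. tensor_vec (\<phi> (n div dR)) (unit_vec dR (n mod dR)))"
  define val where "val = (\<lambda>U. prob_in (\<phi> 0) (partial_trace_R dO dR
    (U * tensor_mat (spec_mat dO oc \<phi>) (gibbs_state dR \<beta> lam \<xi>) * mat_adjoint U)))"
  have \<phi>0: "\<phi> 0 \<in> carrier_vec dO" "\<phi> 0 \<bullet>c \<phi> 0 = 1"
    using phi_onb dO by (auto simp: onb_def)
  have dR_N: "dR \<le> N" using dO by (simp add: N_def)
  have \<psi>: "onb N \<psi>"
    unfolding N_def \<psi>_def by (rule onb_tensor_vec[OF phi_onb xi_onb sigma_bij])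
  have \<chi>: "onb N \<chi>"
    unfolding N_def \<chi>_def using onb_tensor_vec[OF phi_onb onb_unit_vec bij_betw_div_mod] by simp
  have \<chi>_w: "proj_weight dR \<chi> = proj_weight dR w"
    unfolding proj_weight_def \<chi>_def w_def by (intro ext sum.cong) auto
  have p_nonneg: "0 \<le> p n" if "n < N" for n
  proof -
    have "fst (\<sigma> n) < dO"
      using bij_betwE[OF sigma_bij] that unfolding N_def by (metis lessThan_iff mem_Times_iff)
    then show ?thesis
      using o_nonneg gibbs_weights_pos[of dR \<beta> lam "snd (\<sigma> n)"] dR by (simp add: p_def)
  qed
  have \<rho>: "tensor_mat (spec_mat dO oc \<phi>) (gibbs_state dR \<beta> lam \<xi>) = mixture_mat N N p \<psi>"
    unfolding gibbs_state_def N_def p_def \<psi>_def by (rule tensor_mat_spec_mat[OF phi_onb xi_onb sigma_bij])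
  have val_eq: "val U = (\<Sum>n<N. p n * proj_weight dR \<chi> (U *\<^sub>v \<psi> n))" if U: "unitary_mat N U" for U
  proof -
    have UC: "U \<in> carrier_mat N N" using U unfolding unitary_mat_def by simp
    have "val U = prob_in (\<phi> 0) (partial_trace_R dO dR (mixture_mat N N p (\<lambda>n. U *\<^sub>v \<psi> n)))"
      using \<psi> by (simp add: val_def \<rho> conj_mixture_mat[OF UC] onb_carrier)
    also have "\<dots> = (\<Sum>n<N. p n * proj_weight dR \<chi> (U *\<^sub>v \<psi> n))"
      using UC \<psi> \<phi>0 by (simp add: prob_in_partial_trace_R_mixture_mat onb_carrier N_def \<chi>_w w_def)
    finally show ?thesis .
  qed
  have attained: "val U = (\<Sum>m<dR. p m)"
    if U: "unitary_mat N U" and ex: "\<exists>\<xi>'. onb dR \<xi>' \<and> (\<forall>m<dR. U *\<^sub>v \<psi> m = tensor_vec (\<phi> 0) (\<xi>' m))" for U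
  proof -
    obtain \<xi>' where \<xi>': "onb dR \<xi>'" and U\<psi>: "\<forall>m<dR. U *\<^sub>v \<psi> m = tensor_vec (\<phi> 0) (\<xi>' m)"
      using ex by blast
    have "proj_weight dR \<chi> (U *\<^sub>v \<psi> m) = 1" if "m < dR" for m
    proof -
      have "\<xi>' m \<in> carrier_vec dR" "\<xi>' m \<bullet>c \<xi>' m = 1"
        using \<xi>' that by (simp_all add: onb_carrier onb_cscalar_prod)
      then show ?thesis
        using proj_weight_tensor_vec[OF \<phi>0] U\<psi> that by (simp add: \<chi>_w w_def)
    qed
    then show ?thesis
      unfolding val_eq[OF U] by (rule sum_mult_proj_weight_eq[OF \<chi> onb_unitary_image[OF U \<psi>] dR_N])
  qed
  have "\<exists>U. unitary_mat N U \<and> val U = (\<Sum>m<dR. p m)"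
  proof -
    obtain U where U: "unitary_mat N U" and U\<psi>: "\<forall>k<N. U *\<^sub>v \<psi> k = \<chi> k"
      using unitary_mat_from_onb[OF \<psi> \<chi>] by blast
    have "\<forall>m<dR. U *\<^sub>v \<psi> m = tensor_vec (\<phi> 0) (unit_vec dR m)"
      using U\<psi> dR_N by (simp add: \<chi>_def)
    then show ?thesis using U attained onb_unit_vec by blast
  qed
  moreover have "val U \<le> (\<Sum>m<dR. p m)" if U: "unitary_mat N U" for U
    unfolding val_eq[OF U] using p_mono p_nonneg
    by (intro sum_mult_proj_weight_le[OF \<chi> onb_unitary_image[OF U \<psi>] dR_N]) (auto simp: p_def N_def)
  ultimately show ?thesis
    using attained unfolding Let_def N_def p_def \<psi>_def val_def by blast
qed

end
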